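(* Let $a,b\in\mathbb{H}$ have norm one and let $T_{a,b}(x)=axb$. Then $\psi(\psi(y)\bar x+yx)=\psi(y)\bar x+yx$ holds for all $x,y\in\mathbb{H}$ with $\psi=T_{a,b}$ if and only if $a=b=\pm1$, i.e. $T_{a,b}=I_{\mathbb{H}}$.
   Context: $\bar x$ denotes quaternion conjugation and $I_{\mathbb{H}}$ the identity map. *)

theory Defs
  imports Complex_Main
begin

datatype quat = Quat (Re: real) (Im1: real) (Im2: real) (Im3: real)

instantiation quat :: "{zero, one, plus, uminus, times}"
begin
definition "0 = Quat 0 0 0 0"
definition "1 = Quat 1 0 0 0"
definition "x + y = Quat (Re x + Re y) (Im1 x + Im1 y) (Im2 x + Im2 y) (Im3 x + Im3 y)"
definition "- x = Quat (- Re x) (- Im1 x) (- Im2 x) (- Im3 x)"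
definition "x * y = Quat
   (Re x * Re y - Im1 x * Im1 y - Im2 x * Im2 y - Im3 x * Im3 y)
   (Re x * Im1 y + Im1 x * Re y + Im2 x * Im3 y - Im3 x * Im2 y)
   (Re x * Im2 y - Im1 x * Im3 y + Im2 x * Re y + Im3 x * Im1 y)
   (Re x * Im3 y + Im1 x * Im2 y - Im2 x * Im1 y + Im3 x * Re y)"
instance ..
end

definition qcnj :: "quat \<Rightarrow> quat" where
  "qcnj x = Quat (Re x) (- Im1 x) (- Im2 x) (- Im3 x)"

definition qnorm :: "quat \<Rightarrow> real" where
  "qnorm x = sqrt ((Re x)\<^sup>2 + (Im1 x)\<^sup>2 + (Im2 x)\<^sup>2 + (Im3 x)\<^sup>2)"

definition T :: "quat \<Rightarrow> quat \<Rightarrow> quat \<Rightarrow> quat" where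
  "T a b x = a * x * b"

end

theory Submission
  imports Defs
begin

text \<open>
  Putting x = 1 shows that T(x) = a x b is an involution, so y maps to a^2 y b^2 identically
  and b^2 is central, hence real. If b = 1 or b = -1 then a = 1 or a = -1, so T is the identity
  or its negative, and the negative fails the identity. Otherwise a and b are imaginary units;
  x = b, y = 1 gives b = -a, so T is conjugation by a, and x = a then forces a to be central,
  which is absurd.
\<close>

lemma quat_eq_iff: "x = y \<longleftrightarrow> Re x = Re y \<and> Im1 x = Im1 y \<and> Im2 x = Im2 y \<and> Im3 x = Im3 y"
  by (cases x; cases y) auto

instantiation quat :: minus
begin
definition "x - (y::quat) = x + - y"
instance ..
end

lemma quat_components [simp]:
  "Re 0 = 0" "Im1 0 = 0" "Im2 0 = 0" "Im3 0 = 0"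
  "Re 1 = 1" "Im1 1 = 0" "Im2 1 = 0" "Im3 1 = 0"
  "Re (x + y) = Re x + Re y" "Im1 (x + y) = Im1 x + Im1 y"
  "Im2 (x + y) = Im2 x + Im2 y" "Im3 (x + y) = Im3 x + Im3 y"
  "Re (- x) = - Re x" "Im1 (- x) = - Im1 x" "Im2 (- x) = - Im2 x" "Im3 (- x) = - Im3 x"
  "Re (x - y) = Re x - Re y" "Im1 (x - y) = Im1 x - Im1 y"
  "Im2 (x - y) = Im2 x - Im2 y" "Im3 (x - y) = Im3 x - Im3 y"
  "Re (x * y) = Re x * Re y - Im1 x * Im1 y - Im2 x * Im2 y - Im3 x * Im3 y"
  "Im1 (x * y) = Re x * Im1 y + Im1 x * Re y + Im2 x * Im3 y - Im3 x * Im2 y"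
  "Im2 (x * y) = Re x * Im2 y - Im1 x * Im3 y + Im2 x * Re y + Im3 x * Im1 y"
  "Im3 (x * y) = Re x * Im3 y + Im1 x * Im2 y - Im2 x * Im1 y + Im3 x * Re y"
  "Re (qcnj x) = Re x" "Im1 (qcnj x) = - Im1 x" "Im2 (qcnj x) = - Im2 x" "Im3 (qcnj x) = - Im3 x"
  by (simp_all add: zero_quat_def one_quat_def plus_quat_def uminus_quat_def minus_quat_def
      times_quat_def qcnj_def)

instance quat :: ring_1
  by standard (auto simp: quat_eq_iff algebra_simps)

lemma quat_one_neq_minus_one: "(1::quat) \<noteq> - 1"
  by (simp add: quat_eq_iff)

lemma quat_add_self_eq_0_iff: "z + z = 0 \<longleftrightarrow> (z::quat) = 0"
  by (auto simp: quat_eq_iff)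

lemma qcnj_one [simp]: "qcnj 1 = 1"
  by (simp add: quat_eq_iff)

lemma qnorm_eq_1_iff: "qnorm x = 1 \<longleftrightarrow> (Re x)\<^sup>2 + (Im1 x)\<^sup>2 + (Im2 x)\<^sup>2 + (Im3 x)\<^sup>2 = 1"
  by (simp add: qnorm_def)

lemma qnorm_eq_1_imp_mult_qcnj:
  assumes "qnorm x = 1"
  shows "x * qcnj x = 1" and "qcnj x * x = 1"
  using assms by (simp_all add: qnorm_eq_1_iff quat_eq_iff power2_eq_square)

lemma central_quat_is_real:
  assumes "\<And>y. y * c = c * y"
  shows "Im1 c = 0 \<and> Im2 c = 0 \<and> Im3 c = 0"
  using assms[of "Quat 0 1 0 0"] assms[of "Quat 0 0 1 0"] by (simp add: quat_eq_iff)

lemma central_unit_quat: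
  assumes "qnorm c = 1" and "\<And>y. y * c = c * y"
  shows "c = 1 \<or> c = - 1"
proof -
  have "Im1 c = 0 \<and> Im2 c = 0 \<and> Im3 c = 0"
    using central_quat_is_real assms(2) by blast
  moreover from this have "(Re c)\<^sup>2 = 1"
    using assms(1) by (simp add: qnorm_eq_1_iff)
  ultimately show ?thesis
    by (auto simp: quat_eq_iff power2_eq_1_iff)
qed

lemma unit_quat_central_square:
  assumes "qnorm b = 1" and "\<And>y. y * (b * b) = (b * b) * y"
  shows "b = 1 \<or> b = - 1 \<or> b * b = - 1"
proof (cases "Re b = 0")
  case True
  then show ?thesis
    using assms(1) by (simp add: quat_eq_iff qnorm_eq_1_iff power2_eq_square algebra_simps)
next
  case False
  with central_quat_is_real[OF assms(2)]
  have "Im1 b = 0 \<and> Im2 b = 0 \<and> Im3 b = 0"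
    by simp
  then have "\<And>y. y * b = b * y"
    by (simp add: quat_eq_iff algebra_simps)
  then show ?thesis
    using central_unit_quat assms(1) by blast
qed

definition admissible :: "(quat \<Rightarrow> quat) \<Rightarrow> bool" where
  "admissible \<psi> \<longleftrightarrow> (\<forall>x y. \<psi> (\<psi> y * qcnj x + y * x) = \<psi> y * qcnj x + y * x)"

lemma admissibleD:
  "admissible \<psi> \<Longrightarrow> \<psi> (\<psi> y * qcnj x + y * x) = \<psi> y * qcnj x + y * x"
  by (simp add: admissible_def)

lemma admissible_id: "admissible (\<lambda>y. y)"
  by (simp add: admissible_def)

lemma not_admissible_uminus: "\<not> admissible uminus"
proof
  assume "admissible uminus"
  from admissibleD[OF this, where x = "Quat 0 1 0 0" and y = 1] show False
    by (simp add: quat_eq_iff)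
qed

lemma T_add: "T a b (x + y) = T a b x + T a b y"
  by (simp add: T_def ring_distribs)

lemma admissible_T_involution:
  assumes "admissible (T a b)"
  shows "T a b (T a b y) = y"
proof -
  have "T a b (T a b y + y) = T a b y + y"
    using admissibleD[OF assms, where x = 1] by simp
  then show ?thesis
    by (simp add: T_add)
qed

lemma central_if_conjugation_trivial:
  fixes u v c :: "'a::ring_1"
  assumes "v * u = 1" and "\<And>y. u * y * c = y"
  shows "y * c = c * y"
proof -
  have "c = v"
    using assms by (metis mult.assoc mult_1_left mult_1_right)
  have "c * y = c * (u * y * c)"
    using assms(2) by simp
  also have "\<dots> = y * c"
    using assms(1) by (simp add: \<open>c = v\<close> mult.assoc[symmetric])
  finally show ?thesis by simp
qed

lemma unit_quat_square_minus_one_qcnj: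
  assumes "qnorm x = 1" and "x * x = - 1"
  shows "qcnj x = - x"
proof -
  have "qcnj x * (x * x) = (qcnj x * x) * x"
    by (simp add: mult.assoc)
  then have "- qcnj x = x"
    using assms by (simp add: qnorm_eq_1_imp_mult_qcnj)
  then show ?thesis
    by (simp add: minus_equation_iff)
qed

lemma admissible_T_central_square:
  assumes "qnorm a = 1" and "admissible (T a b)"
  shows "y * (b * b) = (b * b) * y" and "a * a * (b * b) = 1"
proof -
  have conj: "(a * a) * y * (b * b) = y" for y
    using admissible_T_involution[OF assms(2), of y] by (simp add: T_def mult.assoc)
  have "(qcnj a * qcnj a) * (a * a) = qcnj a * (qcnj a * a) * a"
    by (simp add: mult.assoc)
  then have "(qcnj a * qcnj a) * (a * a) = 1"
    using qnorm_eq_1_imp_mult_qcnj(2)[OF assms(1)] by simp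
  from central_if_conjugation_trivial[OF this conj]
  show "y * (b * b) = (b * b) * y" .
  show "a * a * (b * b) = 1"
    using conj[of 1] by simp
qed

lemma admissible_T_real:
  assumes "qnorm a = 1" and "admissible (T a b)" and "b = 1 \<or> b = - 1"
  shows "(a = 1 \<and> b = 1) \<or> (a = - 1 \<and> b = - 1)"
proof -
  have "a * a = 1"
    using admissible_T_central_square(2)[OF assms(1,2)] assms(3) by auto
  then have "a = 1 \<or> a = - 1"
    using unit_quat_central_square[OF assms(1)] quat_one_neq_minus_one by auto
  moreover have "T 1 (- 1) = uminus" "T (- 1) 1 = uminus"
    by (simp_all add: T_def fun_eq_iff)
  ultimately show ?thesis
    using assms(2,3) not_admissible_uminus by auto
qed

lemma not_admissible_T_imaginary:
  assumes "qnorm a = 1" and "qnorm b = 1" and "admissible (T a b)" and "b * b = - 1"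
  shows False
proof -
  have aa: "a * a = - 1"
    using admissible_T_central_square(2)[OF assms(1,3)] assms(4) by (simp add: minus_equation_iff)
  then have aa': "a * (a * z) = - z" for z
    by (simp add: mult.assoc[symmetric])
  have "T a b (a + b) = a + b"
    using admissibleD[OF assms(3), where x = b and y = 1]
    by (simp add: T_def unit_quat_square_minus_one_qcnj[OF assms(2,4)] mult.assoc assms(4))
  moreover have "T a b (a + b) = - (a + b)"
    using aa assms(4) by (simp add: T_def algebra_simps mult.assoc)
  ultimately have b: "b = - a"
    by (metis quat_add_self_eq_0_iff add_eq_0_iff2 minus_unique add.commute)
  have "a * y = y * a" for y
  proof -
    txt \<open>Here T y = - a y a; the identity at x = a reduces to a y - y a = y a - a y.\<close>
    have "a * y - y * a = - (a * y - y * a)"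
      using admissibleD[OF assms(3), where x = a and y = y]
      by (simp add: b T_def unit_quat_square_minus_one_qcnj[OF assms(1) aa] algebra_simps aa aa')
    then show ?thesis
      by (metis quat_add_self_eq_0_iff eq_neg_iff_add_eq_0 eq_iff_diff_eq_0)
  qed
  then have "a = 1 \<or> a = - 1"
    using central_unit_quat[OF assms(1)] by metis
  then show False
    using aa quat_one_neq_minus_one by auto
qed

theorem lemma9:
  fixes a b :: quat
  assumes "qnorm a = 1" and "qnorm b = 1"
  shows "(\<forall>x y. T a b (T a b y * qcnj x + y * x) = T a b y * qcnj x + y * x)
         \<longleftrightarrow> ((a = 1 \<and> b = 1) \<or> (a = - 1 \<and> b = - 1))"
proof -
  have "admissible (T a b) \<longleftrightarrow> (a = 1 \<and> b = 1) \<or> (a = - 1 \<and> b = - 1)"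
  proof
    assume adm: "admissible (T a b)"
    have "b = 1 \<or> b = - 1 \<or> b * b = - 1"
      using unit_quat_central_square assms(2) admissible_T_central_square(1)[OF assms(1) adm] by blast
    then show "(a = 1 \<and> b = 1) \<or> (a = - 1 \<and> b = - 1)"
      using admissible_T_real not_admissible_T_imaginary assms adm by blast
  next
    assume "(a = 1 \<and> b = 1) \<or> (a = - 1 \<and> b = - 1)"
    then have "T a b = (\<lambda>y. y)"
      by (auto simp: T_def fun_eq_iff)
    then show "admissible (T a b)"
      using admissible_id by simp
  qed
  then show ?thesis
    by (simp add: admissible_def)
qed

end
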